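(* For every $\mu\in\mathcal P(\mathcal X)$ and $\varepsilon>0$ there exists $\delta>0$ such that $\mathcal W(\mu,\nu)<\varepsilon$ for every $\nu\in\mathcal P(\mathcal X)$ with $\|\mu-\nu\|\le\delta$.
   Context: $\mathcal X=\{1,\dots,d\}$ finite, $\mathcal P(\mathcal X)\subset\mathbb R^{\mathcal X}$, $\|\cdot\|$ the Euclidean norm. $K:\mathcal P(\mathcal X)\times\mathcal X\to\mathbb R$ with $K_x$ twice continuously differentiable; $U=\sum_x\mu_xK_x$, $H_x=\partial_{\mu_x}U$, $\pi_x(\mu)=e^{-H_x(\mu)}/\sum_ze^{-H_z(\mu)}$. $\{Q(\mu)\}$ rate matrices ($Q_{xy}\ge0$, $x\ne y$), each irreducible with $\pi_x(\mu)Q_{xy}(\mu)=\pi_y(\mu)Q_{yx}(\mu)$, $\mu\mapsto Q_{xy}(\mu)$ Lipschitz. $\Lambda(s,t)=\int_0^1s^\alpha t^{1-\alpha}d\alpha$, $w_{xy}(\mu)=\Lambda(\mu_xQ_{xy}(\mu),\mu_yQ_{yx}(\mu))$, $\mathcal A(\mu,\psi)=\frac12\sum_{x,y}(\psi_y-\psi_x)^2w_{xy}(\mu)$. $(c,\psi)\in\mathrm{CE}_1(\mu,\nu)$: $c:[0,1]\to\mathcal P(\mathcal X)$ continuous from $\mu$ to $\nu$, $v_{xy}(t)=w_{xy}(c(t))(\psi_y(t)-\psi_x(t))$ integrable, $\int_0^1[\dot\varphi c_x-\varphi(\delta v)_x]dt=0$ for all $\varphi\in C^1_c((0,1))$, $(\delta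 v)_x=\frac12\sum_y(v_{xy}-v_{yx})$. $\mathcal W(\mu,\nu)^2=\inf\{\int_0^1\mathcal A(c,\psi)dt:(c,\psi)\in\mathrm{CE}_1(\mu,\nu)\}$. *)

theory Defs
  imports "HOL-Analysis.Analysis"
begin

text \<open>The finite state space X = {1..d} is modelled by a finite type 'n;
  measures on X are vectors in real^'n (Euclidean norm).\<close>

definition Prob :: "(real^'n::finite) set" where
  "Prob = {\<mu>. (\<forall>x. 0 \<le> \<mu> $ x) \<and> (\<Sum>x\<in>UNIV. \<mu> $ x) = 1}"

definition C2_on :: "(real^'n::finite) set \<Rightarrow> (real^'n \<Rightarrow> real) \<Rightarrow> bool" where
  "C2_on S f \<longleftrightarrow> (\<exists>f' f''.
     (\<forall>\<mu>\<in>S. (f has_derivative blinfun_apply (f' \<mu>)) (at \<mu>)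
            \<and> (f' has_derivative blinfun_apply (f'' \<mu>)) (at \<mu>))
     \<and> continuous_on S f'')"

definition Upot :: "((real^'n::finite) \<Rightarrow> 'n \<Rightarrow> real) \<Rightarrow> real^'n \<Rightarrow> real" where
  "Upot K \<mu> = (\<Sum>x\<in>UNIV. \<mu> $ x * K \<mu> x)"

definition Hpot :: "((real^'n::finite) \<Rightarrow> 'n \<Rightarrow> real) \<Rightarrow> real^'n \<Rightarrow> 'n \<Rightarrow> real" where
  "Hpot K \<mu> x = frechet_derivative (Upot K) (at \<mu>) (axis x 1)"

definition gibbs :: "((real^'n::finite) \<Rightarrow> 'n \<Rightarrow> real) \<Rightarrow> real^'n \<Rightarrow> 'n \<Rightarrow> real" where
  "gibbs K \<mu> x = exp (- Hpot K \<mu> x) / (\<Sum>z\<in>UNIV. exp (- Hpot K \<mu> z))"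

definition logmean :: "real \<Rightarrow> real \<Rightarrow> real" where
  "logmean s t = integral {0..1} (\<lambda>a. s powr a * t powr (1 - a))"

definition wgt :: "((real^'n::finite) \<Rightarrow> 'n \<Rightarrow> 'n \<Rightarrow> real) \<Rightarrow> real^'n \<Rightarrow> 'n \<Rightarrow> 'n \<Rightarrow> real" where
  "wgt Q \<mu> x y = logmean (\<mu> $ x * Q \<mu> x y) (\<mu> $ y * Q \<mu> y x)"

definition action :: "((real^'n::finite) \<Rightarrow> 'n \<Rightarrow> 'n \<Rightarrow> real) \<Rightarrow> real^'n \<Rightarrow> ('n \<Rightarrow> real) \<Rightarrow> real" where
  "action Q \<mu> \<psi> = 1/2 * (\<Sum>x\<in>UNIV. \<Sum>y\<in>UNIV. (\<psi> y - \<psi> x)^2 * wgt Q \<mu> x y)"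

definition CE1 :: "((real^'n::finite) \<Rightarrow> 'n \<Rightarrow> 'n \<Rightarrow> real) \<Rightarrow> real^'n \<Rightarrow> real^'n
     \<Rightarrow> ((real \<Rightarrow> real^'n) \<times> (real \<Rightarrow> 'n \<Rightarrow> real)) set" where
  "CE1 Q \<mu> \<nu> = {(c, \<psi>).
     continuous_on {0..1} c \<and> (\<forall>t\<in>{0..1}. c t \<in> Prob) \<and> c 0 = \<mu> \<and> c 1 = \<nu> \<and>
     (\<forall>x y. (\<lambda>t. wgt Q (c t) x y * (\<psi> t y - \<psi> t x)) absolutely_integrable_on {0..1}) \<and>
     (\<forall>(\<phi>::real \<Rightarrow> real) \<phi>' a b x.
        (\<forall>t. (\<phi> has_real_derivative \<phi>' t) (at t)) \<and> continuous_on UNIV \<phi>' \<and>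
        0 < a \<and> a \<le> b \<and> b < 1 \<and> (\<forall>t. t \<notin> {a..b} \<longrightarrow> \<phi> t = 0) \<longrightarrow>
        integral {0..1} (\<lambda>t. \<phi>' t * c t $ x
           - \<phi> t * (1/2 * (\<Sum>y\<in>UNIV. wgt Q (c t) x y * (\<psi> t y - \<psi> t x)
                                   - wgt Q (c t) y x * (\<psi> t x - \<psi> t y)))) = 0)}"

definition Wass2 :: "((real^'n::finite) \<Rightarrow> 'n \<Rightarrow> 'n \<Rightarrow> real) \<Rightarrow> real^'n \<Rightarrow> real^'n \<Rightarrow> ennreal" where
  "Wass2 Q \<mu> \<nu> = (INF p\<in>CE1 Q \<mu> \<nu>.
      \<integral>\<^sup>+ t. ennreal (action Q (fst p t) (snd p t)) * indicator {0..1} t \<partial>lborel)"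

definition Wass :: "((real^'n::finite) \<Rightarrow> 'n \<Rightarrow> 'n \<Rightarrow> real) \<Rightarrow> real^'n \<Rightarrow> real^'n \<Rightarrow> ennreal" where
  "Wass Q \<mu> \<nu> = (if Wass2 Q \<mu> \<nu> = top then top else ennreal (sqrt (enn2real (Wass2 Q \<mu> \<nu>))))"

end

theory Submission
  imports Defs
begin

text \<open>Join \<open>\<mu>\<close> to \<open>\<nu>\<close> by the curve that interpolates along a smoothstep and mixes in
  the amount \<open>\<eta> bump(t)\<close> of the uniform measure, where \<open>\<eta>\<close> bounds \<open>\<parallel>\<nu> - \<mu>\<parallel>\<close> and
  \<open>bump(t) = 16 t\<^sup>2 (1 - t)\<^sup>2\<close>. Every mass on the curve is then at least \<open>\<eta> bump(t) / |X|\<close>,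
  while the squared speed is \<open>O(\<eta>\<^sup>2 bump(t))\<close>. Near \<open>\<mu>\<close> the rates are bounded below on the
  edges of the irreducible jump graph (in both directions, by reversibility), so the weights
  \<open>w\<^sub>x\<^sub>y\<close> along the curve are at least of order \<open>\<eta> bump(t)\<close> on these edges. Taking for \<open>\<psi>\<close>
  the solution of the graph Poisson equation with the velocity as source, a discrete Poincare
  inequality bounds the action by (squared speed)/(minimal edge weight) \<open>= O(\<eta>)\<close>, uniformly
  in \<open>t\<close>. Hence \<open>W(\<mu>, \<nu>)\<^sup>2 = O(\<eta>)\<close>.\<close>

section \<open>The logarithmic mean\<close>

lemma logmean_integrand_continuous:
  "continuous_on {0..1} (\<lambda>a::real. s powr a * t powr (1 - a))"
proof -
  have powr_continuous: "continuous_on {0..1} (\<lambda>a::real. x powr (f a))"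
    if "continuous_on {0..1} f" for x :: real and f
  proof (cases "x = 0")
    case False
    then show ?thesis unfolding powr_def using that by (auto intro!: continuous_intros)
  qed simp
  show ?thesis by (intro continuous_intros powr_continuous)
qed

lemma logmean_set_integrable: "set_integrable lborel {0..1::real} (\<lambda>a. s powr a * t powr (1 - a))"
  unfolding set_integrable_def
  by (rule borel_integrable_compact[OF compact_Icc logmean_integrand_continuous])

lemma logmean_integrable: "(\<lambda>a. s powr a * t powr (1 - a)) integrable_on {0..1::real}"
  using set_borel_integral_eq_integral(1)[OF logmean_set_integrable] .

lemma logmean_eq_lebesgue_integral:
  "logmean s t = (\<integral>a. indicator {0..1::real} a * (s powr a * t powr (1 - a)) \<partial>lborel)"
  unfolding logmean_def using set_borel_integral_eq_integral(2)[OF logmean_set_integrable, of s t]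
  by (simp add: set_lebesgue_integral_def)

lemma logmean_measurable[measurable]:
  assumes [measurable]: "f \<in> borel_measurable M" "g \<in> borel_measurable M"
  shows "(\<lambda>x. logmean (f x) (g x)) \<in> borel_measurable M"
  unfolding logmean_eq_lebesgue_integral by measurable

lemma logmean_nonneg: "0 \<le> s \<Longrightarrow> 0 \<le> t \<Longrightarrow> 0 \<le> logmean s t"
  unfolding logmean_def by (rule integral_nonneg[OF logmean_integrable]) auto

lemma logmean_ge_min:
  assumes "0 < s" "0 < t"
  shows "min s t \<le> logmean s t"
proof -
  have "integral {0..1::real} (\<lambda>a. min s t) \<le> integral {0..1} (\<lambda>a. s powr a * t powr (1 - a))"
  proof (rule integral_le[OF _ logmean_integrable])
    fix a :: real assume a: "a \<in> {0..1}"
    have "min s t = min s t powr a * min s t powr (1 - a)"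
      using assms by (simp add: powr_add[symmetric])
    also have "\<dots> \<le> s powr a * t powr (1 - a)"
      using a assms by (intro mult_mono powr_mono2) auto
    finally show "min s t \<le> s powr a * t powr (1 - a)" .
  qed (metis box_real(2) integrable_const)
  then show ?thesis by (simp add: logmean_def)
qed

lemma logmean_le_max:
  assumes "0 \<le> s" "0 \<le> t"
  shows "logmean s t \<le> max s t"
proof -
  have "integral {0..1::real} (\<lambda>a. s powr a * t powr (1 - a)) \<le> integral {0..1::real} (\<lambda>a. max s t)"
  proof (rule integral_le[OF logmean_integrable])
    fix a :: real assume a: "a \<in> {0..1}"
    show "s powr a * t powr (1 - a) \<le> max s t"
    proof (cases "max s t = 0")
      case False
      then have m: "0 < max s t" using assms by auto
      have "s powr a * t powr (1 - a) \<le> max s t powr a * max s t powr (1 - a)"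
        using a assms by (intro mult_mono powr_mono2) auto
      also have "\<dots> = max s t" using m by (simp add: powr_add[symmetric])
      finally show ?thesis .
    next
      case True
      then show ?thesis using assms by (simp add: max_def split: if_splits)
    qed
  qed (metis box_real(2) integrable_const)
  then show ?thesis by (simp add: logmean_def)
qed

section \<open>Graph Laplacian, Poincare inequality and the Poisson equation\<close>

definition graph_laplacian :: "('n::finite \<Rightarrow> 'n \<Rightarrow> real) \<Rightarrow> real^'n \<Rightarrow> 'n \<Rightarrow> real" where
  "graph_laplacian W p x = (\<Sum>y\<in>UNIV. W x y * (p$y - p$x))"

definition dirichlet_form :: "('n::finite \<Rightarrow> 'n \<Rightarrow> real) \<Rightarrow> real^'n \<Rightarrow> real" where
  "dirichlet_form W p = 1/2 * (\<Sum>x\<in>UNIV. \<Sum>y\<in>UNIV. (p$y - p$x)^2 * W x y)"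

lemma sum_mult_graph_laplacian:
  assumes sym: "\<And>x y. W x y = W y x"
  shows "(\<Sum>x\<in>UNIV. p$x * graph_laplacian W p x) = - dirichlet_form W p"
proof -
  have forward: "(\<Sum>x\<in>UNIV. p$x * graph_laplacian W p x)
      = (\<Sum>x\<in>UNIV. \<Sum>y\<in>UNIV. W x y * p$x * (p$y - p$x))"
    by (simp add: graph_laplacian_def sum_distrib_left algebra_simps)
  also have "\<dots> = (\<Sum>y\<in>UNIV. \<Sum>x\<in>UNIV. W x y * p$x * (p$y - p$x))"
    by (rule sum.swap)
  also have "\<dots> = (\<Sum>x\<in>UNIV. \<Sum>y\<in>UNIV. W x y * p$y * (p$x - p$y))"
    using sym by simp
  finally have backward: "(\<Sum>x\<in>UNIV. p$x * graph_laplacian W p x)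
      = (\<Sum>x\<in>UNIV. \<Sum>y\<in>UNIV. W x y * p$y * (p$x - p$y))" .
  have "2 * (\<Sum>x\<in>UNIV. p$x * graph_laplacian W p x)
      = (\<Sum>x\<in>UNIV. \<Sum>y\<in>UNIV. W x y * p$x * (p$y - p$x) + W x y * p$y * (p$x - p$y))"
    unfolding sum.distrib using forward backward by simp
  also have "\<dots> = (\<Sum>x\<in>UNIV. \<Sum>y\<in>UNIV. - ((p$y - p$x)^2 * W x y))"
    by (intro sum.cong refl) (simp add: power2_eq_square algebra_simps)
  also have "\<dots> = - 2 * dirichlet_form W p"
    by (simp add: dirichlet_form_def sum_negf)
  finally show ?thesis by simp
qed

lemma sum_graph_laplacian:
  assumes sym: "\<And>x y. W x y = W y x"
  shows "(\<Sum>x\<in>UNIV. graph_laplacian W p x) = 0"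
proof -
  have "(\<Sum>x\<in>UNIV. graph_laplacian W p x) = (\<Sum>y\<in>UNIV. \<Sum>x\<in>UNIV. W x y * (p$y - p$x))"
    unfolding graph_laplacian_def by (rule sum.swap)
  also have "\<dots> = - (\<Sum>x\<in>UNIV. graph_laplacian W p x)"
    using sym by (simp add: graph_laplacian_def sum_negf[symmetric] algebra_simps)
  finally show ?thesis by simp
qed

lemma dirichlet_form_term_nonneg:
  fixes W :: "'n::finite \<Rightarrow> 'n \<Rightarrow> real"
  assumes "\<And>x y. x \<noteq> y \<Longrightarrow> 0 \<le> W x y"
  shows "0 \<le> (p$y - p$x)^2 * W x y"
  using assms[of x y] by (cases "x = y") (auto intro: mult_nonneg_nonneg)

lemma dirichlet_form_nonneg:
  fixes W :: "'n::finite \<Rightarrow> 'n \<Rightarrow> real"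
  assumes "\<And>x y. x \<noteq> y \<Longrightarrow> 0 \<le> W x y"
  shows "0 \<le> dirichlet_form W p"
  unfolding dirichlet_form_def
  by (intro mult_nonneg_nonneg sum_nonneg dirichlet_form_term_nonneg assms) simp

lemma dirichlet_form_ge_term:
  fixes W :: "'n::finite \<Rightarrow> 'n \<Rightarrow> real"
  assumes nonneg: "\<And>x y. x \<noteq> y \<Longrightarrow> 0 \<le> W x y"
  shows "(p$y - p$x)^2 * W x y \<le> 2 * dirichlet_form W p"
proof -
  note term_nonneg = dirichlet_form_term_nonneg[OF nonneg]
  have "(p$y - p$x)^2 * W x y \<le> (\<Sum>b\<in>UNIV. (p$b - p$x)^2 * W x b)"
    by (rule member_le_sum) (auto intro: term_nonneg)
  also have "\<dots> \<le> (\<Sum>a\<in>UNIV. \<Sum>b\<in>UNIV. (p$b - p$a)^2 * W a b)"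
    by (rule member_le_sum[where f="\<lambda>a. \<Sum>b\<in>UNIV. (p$b - p$a)^2 * W a b"])
      (auto intro: sum_nonneg term_nonneg)
  finally show ?thesis by (simp add: dirichlet_form_def)
qed

lemma dirichlet_form_ge_edges:
  fixes W :: "'n::finite \<Rightarrow> 'n \<Rightarrow> real" and E :: "('n \<times> 'n) set"
  assumes nonneg: "\<And>x y. x \<noteq> y \<Longrightarrow> 0 \<le> W x y"
    and lower: "\<And>a b. (a, b) \<in> E \<Longrightarrow> a \<noteq> b \<Longrightarrow> w0 \<le> W a b"
    and "0 \<le> w0"
  shows "w0/2 * (\<Sum>(a,b)\<in>E. (p$b - p$a)^2) \<le> dirichlet_form W p"
proof -
  have "w0 * (\<Sum>(a,b)\<in>E. (p$b - p$a)^2) = (\<Sum>(a,b)\<in>E. w0 * (p$b - p$a)^2)"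
    by (simp add: sum_distrib_left case_prod_unfold)
  also have "\<dots> \<le> (\<Sum>(a,b)\<in>E. (p$b - p$a)^2 * W a b)"
  proof (intro sum_mono, clarsimp)
    fix a b assume "(a, b) \<in> E"
    then show "w0 * (p $ b - p $ a)\<^sup>2 \<le> (p $ b - p $ a)\<^sup>2 * W a b"
      using lower[of a b] by (cases "a = b") (auto simp: mult.commute mult_right_mono)
  qed
  also have "\<dots> \<le> (\<Sum>(a,b)\<in>UNIV. (p$b - p$a)^2 * W a b)"
    by (intro sum_mono2) (auto intro: dirichlet_form_term_nonneg[OF nonneg])
  also have "\<dots> = (\<Sum>x\<in>UNIV. \<Sum>y\<in>UNIV. (p$y - p$x)^2 * W x y)"
    by (simp add: sum.cartesian_product[symmetric] UNIV_Times_UNIV[symmetric] del: UNIV_Times_UNIV)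
  finally show ?thesis by (simp add: dirichlet_form_def)
qed

lemma sq_le_edge_energy_rtrancl:
  fixes E :: "('n::finite \<times> 'n) set"
  assumes "(x0, x) \<in> E\<^sup>*"
  shows "\<exists>C>0. \<forall>p::real^'n. (p$x)^2 \<le> C * ((p$x0)^2 + (\<Sum>(a,b)\<in>E. (p$b - p$a)^2))"
  using assms
proof (induction rule: rtrancl_induct)
  case base
  have "0 \<le> (\<Sum>(a,b)\<in>E. (p$b - p$a)^2)" for p :: "real^'n"
    by (rule sum_nonneg) (simp add: case_prod_unfold)
  then show ?case by (intro exI[of _ 1]) simp
next
  case (step y z)
  then obtain C where C: "C > 0"
    "\<And>p::real^'n. (p$y)^2 \<le> C * ((p$x0)^2 + (\<Sum>(a,b)\<in>E. (p$b - p$a)^2))"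
    by blast
  show ?case
  proof (intro exI[of _ "2*C + 2"] conjI allI)
    fix p :: "real^'n"
    define S where "S = (\<Sum>(a,b)\<in>E. (p$b - p$a)^2)"
    have "(p$z - p$y)^2 \<le> S"
      unfolding S_def using member_le_sum[where f="\<lambda>(a,b). (p$b - p$a)^2" and i="(y,z)" and A=E] step(2)
      by (simp add: case_prod_unfold)
    have "2*(p$y)^2 + 2*(p$z - p$y)^2 - (p$z)^2 = (p$z - 2*p$y)^2"
      by (simp add: power2_eq_square algebra_simps)
    then have "(p$z)^2 \<le> 2*(p$y)^2 + 2*(p$z - p$y)^2"
      using zero_le_power2[of "p$z - 2*p$y"] by linarith
    also have "\<dots> \<le> 2 * (C * ((p$x0)^2 + S)) + 2 * ((p$x0)^2 + S)"
      using C(2)[of p] \<open>(p$z - p$y)^2 \<le> S\<close> unfolding S_def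
      by (intro add_mono mult_left_mono add_increasing) simp_all
    finally show "(p$z)^2 \<le> (2*C + 2) * ((p$x0)^2 + S)"
      by (simp add: algebra_simps)
  qed (use C in simp)
qed

lemma discrete_poincare:
  fixes E :: "('n::finite \<times> 'n) set"
  assumes "\<And>x. (x0, x) \<in> E\<^sup>*"
  shows "\<exists>C>0. \<forall>p::real^'n. (\<Sum>x\<in>UNIV. (p$x)^2) \<le> C * ((p$x0)^2 + (\<Sum>(a,b)\<in>E. (p$b - p$a)^2))"
proof -
  have "\<forall>x. \<exists>C>0. \<forall>p::real^'n. (p$x)^2 \<le> C * ((p$x0)^2 + (\<Sum>(a,b)\<in>E. (p$b - p$a)^2))"
    using sq_le_edge_energy_rtrancl[OF assms] by blast
  then obtain C where "\<forall>x. C x > 0 \<and>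
      (\<forall>p::real^'n. (p$x)^2 \<le> C x * ((p$x0)^2 + (\<Sum>(a,b)\<in>E. (p$b - p$a)^2)))"
    by (metis choice)
  then have C: "\<And>x. C x > 0"
    "\<And>x p. (p$x)^2 \<le> C x * ((p$x0)^2 + (\<Sum>(a,b)\<in>E. (p$b - p$a)^2))"
    by auto
  show ?thesis
  proof (intro exI[of _ "\<Sum>x\<in>UNIV. C x"] conjI allI)
    show "0 < (\<Sum>x\<in>UNIV. C x)" using C(1) by (simp add: sum_pos)
    fix p :: "real^'n"
    have "(\<Sum>x\<in>UNIV. (p$x)^2) \<le> (\<Sum>x\<in>UNIV. C x * ((p$x0)^2 + (\<Sum>(a,b)\<in>E. (p$b - p$a)^2)))"
      by (intro sum_mono C(2))
    then show "(\<Sum>x\<in>UNIV. (p$x)^2) \<le> (\<Sum>x\<in>UNIV. C x) * ((p$x0)^2 + (\<Sum>(a,b)\<in>E. (p$b - p$a)^2))"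
      by (simp add: sum_distrib_right)
  qed
qed


text \<open>The extra \<open>-1\<close> at \<open>x0\<close> pins the solution to vanish there, which makes the
  matrix invertible; Cramer's rule then gives a solution that is visibly measurable in the
  weights.\<close>

definition poisson_matrix :: "('n::finite \<Rightarrow> 'n \<Rightarrow> real) \<Rightarrow> 'n \<Rightarrow> real^'n^'n" where
  "poisson_matrix W x0 = (\<chi> x y. if x = y then - (\<Sum>z\<in>UNIV-{x}. W x z) - (if x = x0 then 1 else 0)
                                   else W x y)"

definition poisson_solution :: "('n::finite \<Rightarrow> 'n \<Rightarrow> real) \<Rightarrow> 'n \<Rightarrow> real^'n \<Rightarrow> real^'n" where
  "poisson_solution W x0 b =
     (\<chi> k. det (\<chi> i j. if j = k then b$i else poisson_matrix W x0 $i$j) / det (poisson_matrix W x0))"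

lemma poisson_matrix_mult:
  "(poisson_matrix W x0 *v p)$x = graph_laplacian W p x - (if x = x0 then p$x else 0)"
proof -
  have "(poisson_matrix W x0 *v p)$x
      = poisson_matrix W x0 $x$x * p$x + (\<Sum>j\<in>UNIV-{x}. poisson_matrix W x0 $x$j * p$j)"
    by (simp add: matrix_vector_mult_def sum.remove)
  also have "\<dots> = (\<Sum>j\<in>UNIV-{x}. W x j * (p$j - p$x)) - (if x = x0 then p$x else 0)"
    by (simp add: poisson_matrix_def algebra_simps sum_subtractf sum_distrib_left sum_distrib_right)
  also have "(\<Sum>j\<in>UNIV-{x}. W x j * (p$j - p$x)) = graph_laplacian W p x"
    unfolding graph_laplacian_def by (simp add: sum_diff1)
  finally show ?thesis .
qed

lemma poisson_solution_measurable:
  fixes W :: "'a \<Rightarrow> 'n::finite \<Rightarrow> 'n \<Rightarrow> real"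
  assumes [measurable]: "\<And>i j. (\<lambda>t. W t i j) \<in> borel_measurable M"
    and [measurable]: "\<And>i. (\<lambda>t. b t $ i) \<in> borel_measurable M"
  shows "(\<lambda>t. poisson_solution (W t) x0 (b t) $ k) \<in> borel_measurable M"
proof -
  have [measurable]: "(\<lambda>t. det (A t)) \<in> borel_measurable M"
    if [measurable]: "\<And>i j. (\<lambda>t. A t $ i $ j) \<in> borel_measurable M" for A :: "'a \<Rightarrow> real^'n^'n"
    unfolding det_def by measurable
  have [measurable]: "(\<lambda>t. poisson_matrix (W t) x0 $ i $ j) \<in> borel_measurable M" for i j
    unfolding poisson_matrix_def by simp
  have [measurable]: "(\<lambda>t. det (poisson_matrix (W t) x0)) \<in> borel_measurable M"
    "(\<lambda>t. det (\<chi> i j. if j = k then b t $ i else poisson_matrix (W t) x0 $ i $ j)) \<in> borel_measurable M"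
    by measurable simp_all
  show ?thesis unfolding poisson_solution_def by simp
qed

locale poisson_setting =
  fixes W :: "'n::finite \<Rightarrow> 'n \<Rightarrow> real" and E :: "('n \<times> 'n) set" and x0 :: 'n and w0 Kc :: real
  assumes sym: "\<And>x y. W x y = W y x"
    and nonneg: "\<And>x y. x \<noteq> y \<Longrightarrow> 0 \<le> W x y"
    and edge_lower: "\<And>a b. (a, b) \<in> E \<Longrightarrow> a \<noteq> b \<Longrightarrow> w0 \<le> W a b"
    and w0_pos: "0 < w0" and Kc_pos: "0 < Kc"
    and poincare: "\<And>p::real^'n. (\<Sum>x\<in>UNIV. (p$x)^2) \<le> Kc * ((p$x0)^2 + (\<Sum>(a,b)\<in>E. (p$b - p$a)^2))"
begin

lemma edge_energy_le: "(\<Sum>(a,b)\<in>E. (p$b - p$a)^2) \<le> 2 / w0 * dirichlet_form W p"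
proof -
  have "w0/2 * (\<Sum>(a,b)\<in>E. (p$b - p$a)^2) \<le> dirichlet_form W p"
    by (rule dirichlet_form_ge_edges) (use nonneg edge_lower w0_pos in auto)
  then show ?thesis using w0_pos by (simp add: field_simps)
qed

lemma sum_sq_le_dirichlet_form:
  "(\<Sum>x\<in>UNIV. (p$x)^2) \<le> 2 * Kc / w0 * dirichlet_form W p + Kc * (p$x0)^2"
  using poincare[of p] mult_left_mono[OF edge_energy_le[of p], of Kc] Kc_pos
  by (simp add: algebra_simps)

lemma det_poisson_matrix_nonzero: "det (poisson_matrix W x0) \<noteq> 0"
proof -
  have "p = 0" if p: "poisson_matrix W x0 *v p = 0" for p :: "real^'n"
  proof -
    have "graph_laplacian W p x = (if x = x0 then p$x else 0)" for x
      using arg_cong[OF p, of "\<lambda>v. v$x"] by (simp add: poisson_matrix_mult)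
    then have "(\<Sum>x\<in>UNIV. p$x * graph_laplacian W p x) = (\<Sum>x\<in>UNIV. if x = x0 then (p$x)^2 else 0)"
      by (intro sum.cong) (simp_all add: power2_eq_square)
    then have "(\<Sum>x\<in>UNIV. p$x * graph_laplacian W p x) = (p$x0)^2"
      by simp
    then have "(p$x0)^2 + dirichlet_form W p = 0"
      using sum_mult_graph_laplacian[of W p] sym by simp
    moreover have "0 \<le> dirichlet_form W p" by (rule dirichlet_form_nonneg) (rule nonneg)
    ultimately have "p$x0 = 0" "dirichlet_form W p = 0" by (auto simp: add_nonneg_eq_0_iff)
    then have "(\<Sum>x\<in>UNIV. (p$x)^2) = 0"
      using sum_sq_le_dirichlet_form[of p] sum_nonneg[of UNIV "\<lambda>x. (p$x)^2"] by simp
    then show "p = 0"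
      using sum_nonneg_eq_0_iff[of UNIV "\<lambda>x. (p$x)^2"] by (simp add: vec_eq_iff)
  qed
  then obtain B where "B ** poisson_matrix W x0 = mat 1"
    using matrix_left_invertible_ker by blast
  then have "invertible (poisson_matrix W x0)"
    unfolding invertible_def using matrix_left_right_inverse by blast
  then show ?thesis by (simp add: invertible_det_nz)
qed

lemma poisson_solution_solves:
  assumes "(\<Sum>x\<in>UNIV. b$x) = 0"
  shows "poisson_solution W x0 b $ x0 = 0" "graph_laplacian W (poisson_solution W x0 b) x = b$x"
proof -
  let ?p = "poisson_solution W x0 b"
  have solves: "poisson_matrix W x0 *v ?p = b"
    using cramer[OF det_poisson_matrix_nonzero] by (simp add: poisson_solution_def)
  have eq: "graph_laplacian W ?p x - (if x = x0 then ?p$x else 0) = b$x" for x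
    using arg_cong[OF solves, of "\<lambda>v. v$x"] by (simp add: poisson_matrix_mult)
  have "(\<Sum>x\<in>UNIV. graph_laplacian W ?p x - (if x = x0 then ?p$x else 0)) = 0"
    using eq assms by simp
  then show anchor: "?p $ x0 = 0"
    using sum_graph_laplacian[of W ?p] sym by (simp add: sum_subtractf)
  show "graph_laplacian W ?p x = b$x" using eq[of x] anchor by (cases "x = x0") auto
qed

lemma dirichlet_form_poisson_solution_le:
  assumes "(\<Sum>x\<in>UNIV. b$x) = 0"
  shows "dirichlet_form W (poisson_solution W x0 b) \<le> 2 * Kc / w0 * (norm b)^2"
proof -
  let ?p = "poisson_solution W x0 b"
  define D where "D = dirichlet_form W ?p"
  have D_nonneg: "0 \<le> D" unfolding D_def by (rule dirichlet_form_nonneg) (rule nonneg)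
  have "D = - (\<Sum>x\<in>UNIV. ?p$x * graph_laplacian W ?p x)"
    unfolding D_def using sum_mult_graph_laplacian[of W ?p] sym by simp
  also have "\<dots> = - inner ?p b"
    using poisson_solution_solves[OF assms] by (simp add: inner_vec_def)
  also have "\<dots> \<le> norm ?p * norm b"
    using norm_cauchy_schwarz[of "-?p" b] by simp
  finally have "D^2 \<le> (norm ?p)^2 * (norm b)^2"
    using D_nonneg power_mono by (fastforce simp: power_mult_distrib)
  also have "(norm ?p)^2 \<le> 2 * Kc / w0 * D"
    using sum_sq_le_dirichlet_form[of ?p] poisson_solution_solves(1)[OF assms]
    by (simp add: D_def norm_vec_def L2_set_def sum_nonneg)
  then have "(norm ?p)^2 * (norm b)^2 \<le> (2 * Kc / w0 * D) * (norm b)^2"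
    by (intro mult_right_mono) simp_all
  finally have "D * D \<le> D * (2 * Kc / w0 * (norm b)^2)"
    by (simp add: power2_eq_square algebra_simps)
  then show ?thesis
  proof (cases "D = 0")
    case False
    with D_nonneg have "0 < D" by simp
    from mult_le_cancel_left_pos[OF this, THEN iffD1, OF \<open>D * D \<le> _\<close>] show ?thesis
      by (simp add: D_def)
  qed (use Kc_pos w0_pos in \<open>simp add: D_def\<close>)
qed

end

section \<open>A curve through strictly positive measures\<close>

definition smoothstep :: "real \<Rightarrow> real" where "smoothstep t = 3*t^2 - 2*t^3"
definition smoothstep' :: "real \<Rightarrow> real" where "smoothstep' t = 6*t - 6*t^2"
definition bump :: "real \<Rightarrow> real" where "bump t = 16*t^2*(1-t)^2"
definition bump' :: "real \<Rightarrow> real" where "bump' t = 32*t*(1-t)*(1-2*t)"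

lemma smoothstep_has_derivative: "(smoothstep has_real_derivative smoothstep' t) (at t within S)"
  unfolding smoothstep_def smoothstep'_def
  by (auto intro!: derivative_eq_intros simp: power2_eq_square)

lemma bump_has_derivative: "(bump has_real_derivative bump' t) (at t within S)"
  unfolding bump_def bump'_def
  by (auto intro!: derivative_eq_intros simp: power2_eq_square algebra_simps)

lemma smoothstep_range: "0 \<le> t \<Longrightarrow> t \<le> 1 \<Longrightarrow> 0 \<le> smoothstep t \<and> smoothstep t \<le> 1"
proof -
  assume t: "0 \<le> t" "t \<le> 1"
  have "smoothstep t = t^2 * (3 - 2*t)" "1 - smoothstep t = (1-t)^2 * (1 + 2*t)"
    by (simp_all add: smoothstep_def algebra_simps power3_eq_cube power2_eq_square)
  moreover have "0 \<le> t^2 * (3 - 2*t)" "0 \<le> (1-t)^2 * (1 + 2*t)"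
    using t by (intro mult_nonneg_nonneg; simp)+
  ultimately show ?thesis by linarith
qed

lemma bump_range: "0 \<le> t \<Longrightarrow> t \<le> 1 \<Longrightarrow> 0 \<le> bump t \<and> bump t \<le> 1"
proof -
  assume t: "0 \<le> t" "t \<le> 1"
  have "t*(1-t) \<le> 1/4" using zero_le_power2[of "t - 1/2"] by (simp add: power2_eq_square algebra_simps)
  moreover have "0 \<le> t*(1-t)" using t by simp
  ultimately have "(t*(1-t))^2 \<le> (1/4)^2" by (intro power_mono)
  moreover have "bump t = 16 * (t*(1-t))^2" by (simp add: bump_def power_mult_distrib)
  ultimately show ?thesis by (simp add: power2_eq_square)
qed

lemma bump_pos: "0 < t \<Longrightarrow> t < 1 \<Longrightarrow> 0 < bump t"
  by (simp add: bump_def)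

lemma smoothstep'_sq: "(smoothstep' t)^2 = 9/4 * bump t"
  by (simp add: smoothstep'_def bump_def power2_eq_square algebra_simps)

lemma bump'_sq_le: "0 \<le> t \<Longrightarrow> t \<le> 1 \<Longrightarrow> (bump' t)^2 \<le> 64 * bump t"
proof -
  assume t: "0 \<le> t" "t \<le> 1"
  have eq: "(bump' t)^2 = 64 * bump t * (1-2*t)^2"
    by (simp add: bump'_def bump_def power2_eq_square algebra_simps)
  have "(1-2*t)^2 = 1 - 4*(t*(1-t))" by (simp add: power2_eq_square algebra_simps)
  then have "(1-2*t)^2 \<le> 1" using t by simp
  then show ?thesis unfolding eq using bump_range[OF t] by (simp add: mult_left_le)
qed

lemma smoothstep'_nonneg: "0 \<le> t \<Longrightarrow> t \<le> 1 \<Longrightarrow> 0 \<le> smoothstep' t"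
  unfolding smoothstep'_def using mult_left_le[of t t] by (simp add: power2_eq_square)

lemma Prob_norm_le_1: "p \<in> Prob \<Longrightarrow> norm p \<le> 1"
  using norm_le_l1_cart[of p] by (simp add: Prob_def)

lemma Prob_dist_le_2: "p \<in> Prob \<Longrightarrow> r \<in> Prob \<Longrightarrow> norm (p - r) \<le> 2"
  using norm_triangle_ineq4[of p r] Prob_norm_le_1[of p] Prob_norm_le_1[of r] by linarith

lemma Prob_component_le_1: "p \<in> Prob \<Longrightarrow> p $ x \<le> 1"
  using member_le_sum[of x UNIV "\<lambda>x. p $ x"] by (simp add: Prob_def)

lemma convex_comb_Prob:
  "p \<in> Prob \<Longrightarrow> r \<in> Prob \<Longrightarrow> 0 \<le> a \<Longrightarrow> a \<le> 1 \<Longrightarrow> (1 - a) *\<^sub>R p + a *\<^sub>R r \<in> Prob"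
  by (auto simp: Prob_def sum.distrib sum_distrib_left[symmetric] intro!: add_nonneg_nonneg mult_nonneg_nonneg)

definition unif_prob :: "real^'n::finite" where "unif_prob = (\<chi> x. 1 / real CARD('n))"

lemma unif_prob_Prob: "(unif_prob :: real^'n::finite) \<in> Prob"
  by (simp add: Prob_def unif_prob_def)

definition interp :: "real^'n::finite \<Rightarrow> real^'n \<Rightarrow> real \<Rightarrow> real^'n" where
  "interp m n t = (1 - smoothstep t) *\<^sub>R m + smoothstep t *\<^sub>R n"

definition mix_path :: "real^'n::finite \<Rightarrow> real^'n \<Rightarrow> real \<Rightarrow> real \<Rightarrow> real^'n" where
  "mix_path m n e t = (1 - e * bump t) *\<^sub>R interp m n t + (e * bump t) *\<^sub>R unif_prob"

definition mix_path' :: "real^'n::finite \<Rightarrow> real^'n \<Rightarrow> real \<Rightarrow> real \<Rightarrow> real^'n" where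
  "mix_path' m n e t = ((1 - e * bump t) * smoothstep' t) *\<^sub>R (n - m)
                       + (e * bump' t) *\<^sub>R (unif_prob - interp m n t)"

lemma mix_path_0: "mix_path m n e 0 = m"
  and mix_path_1: "mix_path m n e 1 = n"
  by (simp_all add: mix_path_def interp_def smoothstep_def bump_def)

lemma interp_Prob: "m \<in> Prob \<Longrightarrow> n \<in> Prob \<Longrightarrow> 0 \<le> t \<Longrightarrow> t \<le> 1 \<Longrightarrow> interp m n t \<in> Prob"
  unfolding interp_def using smoothstep_range by (intro convex_comb_Prob) auto

lemma mix_path_component:
  fixes m :: "real^'n::finite"
  shows "mix_path m n e t $ x = (1 - e * bump t) * ((1 - smoothstep t) * m$x + smoothstep t * n$x)
                                + e * bump t / real CARD('n)"
  by (simp add: mix_path_def interp_def unif_prob_def)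

lemma mix_path'_component:
  fixes m :: "real^'n::finite"
  shows "mix_path' m n e t $ x = (1 - e * bump t) * smoothstep' t * (n$x - m$x)
           + e * bump' t * (1 / real CARD('n) - ((1 - smoothstep t) * m$x + smoothstep t * n$x))"
  by (simp add: mix_path'_def interp_def unif_prob_def)

lemma mix_path_has_derivative:
  fixes m :: "real^'n::finite"
  shows "((\<lambda>t. mix_path m n e t $ x) has_real_derivative mix_path' m n e t $ x) (at t within S)"
  unfolding mix_path_component mix_path'_component
  by (auto intro!: derivative_eq_intros smoothstep_has_derivative bump_has_derivative
      simp: algebra_simps)

lemma mix_path_continuous: "continuous_on UNIV (\<lambda>t. mix_path m n e (max 0 (min 1 t)))"
  unfolding mix_path_def interp_def smoothstep_def bump_def by (intro continuous_intros)

context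
  fixes m n :: "real^'n::finite" and e t :: real
  assumes m: "m \<in> Prob" and n: "n \<in> Prob" and e: "0 \<le> e" "e \<le> 1" and t: "0 \<le> t" "t \<le> 1"
begin

lemma mix_weight_range: "0 \<le> e * bump t" "e * bump t \<le> 1"
  using bump_range[OF t] e by (auto intro: mult_le_one)

lemma mix_path_Prob: "mix_path m n e t \<in> Prob"
  unfolding mix_path_def
  using mix_weight_range by (intro convex_comb_Prob interp_Prob m n t unif_prob_Prob)

lemma mix_path_ge: "e * bump t / real CARD('n) \<le> mix_path m n e t $ x"
proof -
  have "0 \<le> (1 - e * bump t) * ((1 - smoothstep t) * m$x + smoothstep t * n$x)"
    using mix_weight_range smoothstep_range[OF t] m n
    by (intro mult_nonneg_nonneg add_nonneg_nonneg) (auto simp: Prob_def)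
  then show ?thesis by (simp add: mix_path_component)
qed

lemma mix_path_dist: "norm (mix_path m n e t - m) \<le> norm (n - m) + 2 * e"
proof -
  have "mix_path m n e t - m = ((1 - e * bump t) * smoothstep t) *\<^sub>R (n - m) + (e * bump t) *\<^sub>R (unif_prob - m)"
    by (simp add: mix_path_def interp_def algebra_simps)
  also have "norm \<dots> \<le> \<bar>(1 - e * bump t) * smoothstep t\<bar> * norm (n - m) + \<bar>e * bump t\<bar> * norm (unif_prob - m)"
    by (rule order_trans[OF norm_triangle_ineq]) simp
  also have "\<dots> \<le> 1 * norm (n - m) + e * 2"
    using mix_weight_range smoothstep_range[OF t] bump_range[OF t] e
      Prob_dist_le_2[OF unif_prob_Prob m]
    by (intro add_mono mult_mono) (auto simp: abs_mult intro!: mult_le_one mult_left_le)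
  finally show ?thesis by simp
qed

lemma sum_mix_path': "(\<Sum>x\<in>UNIV. mix_path' m n e t $ x) = 0"
proof -
  have "(\<Sum>x\<in>UNIV. mix_path' m n e t $ x)
      = (1 - e * bump t) * smoothstep' t * ((\<Sum>x\<in>UNIV. n$x) - (\<Sum>x\<in>UNIV. m$x))
        + e * bump' t * ((\<Sum>x\<in>UNIV. (unif_prob :: real^'n) $ x) - (\<Sum>x\<in>UNIV. interp m n t $ x))"
    by (simp add: mix_path'_def sum.distrib sum_distrib_left[symmetric] sum_subtractf)
  then show ?thesis
    using m n interp_Prob[OF m n t] unif_prob_Prob[where 'n='n] by (simp add: Prob_def)
qed

lemma mix_path'_norm_sq_le:
  "(norm (mix_path' m n e t))^2 \<le> (9/2 * (norm (n - m))^2 + 512 * e^2) * bump t"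
proof -
  have "norm (mix_path' m n e t)
      \<le> \<bar>(1 - e * bump t) * smoothstep' t\<bar> * norm (n - m) + \<bar>e * bump' t\<bar> * norm (unif_prob - interp m n t)"
    unfolding mix_path'_def by (rule order_trans[OF norm_triangle_ineq]) simp
  also have "\<dots> \<le> smoothstep' t * norm (n - m) + \<bar>e * bump' t\<bar> * 2"
    using mix_weight_range smoothstep'_nonneg[OF t] Prob_dist_le_2[OF unif_prob_Prob interp_Prob[OF m n t]]
    by (intro add_mono mult_mono) (auto simp: abs_mult intro!: mult_left_le_one_le)
  finally have "(norm (mix_path' m n e t))^2 \<le> (smoothstep' t * norm (n - m) + 2 * e * \<bar>bump' t\<bar>)^2"
    using e by (intro power_mono) (auto simp: abs_mult)
  also have "\<dots> \<le> 2 * (smoothstep' t)^2 * (norm (n - m))^2 + 8 * e^2 * (bump' t)^2"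
    using zero_le_power2[of "smoothstep' t * norm (n - m) - 2 * e * \<bar>bump' t\<bar>"]
    by (simp add: power2_eq_square algebra_simps)
  also have "\<dots> \<le> 2 * (9/4 * bump t) * (norm (n - m))^2 + 8 * e^2 * (64 * bump t)"
    unfolding smoothstep'_sq by (intro add_left_mono mult_left_mono bump'_sq_le t) auto
  also have "\<dots> = (9/2 * (norm (n - m))^2 + 512 * e^2) * bump t"
    by (simp add: algebra_simps)
  finally show ?thesis .
qed

end

section \<open>The continuity equation and the transport distance\<close>

definition sym_weights :: "((real^'n::finite) \<Rightarrow> 'n \<Rightarrow> 'n \<Rightarrow> real) \<Rightarrow> real^'n \<Rightarrow> 'n \<Rightarrow> 'n \<Rightarrow> real" where
  "sym_weights Q m x y = (wgt Q m x y + wgt Q m y x) / 2"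

lemma action_eq_dirichlet_form: "action Q m (\<lambda>y. p$y) = dirichlet_form (sym_weights Q m) p"
proof -
  have "(\<Sum>x\<in>UNIV. \<Sum>y\<in>UNIV. (p$y - p$x)^2 * wgt Q m y x)
      = (\<Sum>y\<in>UNIV. \<Sum>x\<in>UNIV. (p$y - p$x)^2 * wgt Q m y x)"
    by (rule sum.swap)
  also have "\<dots> = (\<Sum>x\<in>UNIV. \<Sum>y\<in>UNIV. (p$y - p$x)^2 * wgt Q m x y)"
    by (intro sum.cong refl) (simp add: power2_commute)
  finally show ?thesis
    by (simp add: action_def dirichlet_form_def sym_weights_def sum.distrib
        sum_divide_distrib[symmetric] algebra_simps)
qed

lemma divergence_eq_graph_laplacian:
  "1/2 * (\<Sum>y\<in>UNIV. wgt Q m x y * (p$y - p$x) - wgt Q m y x * (p$x - p$y))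
     = graph_laplacian (sym_weights Q m) p x"
  unfolding graph_laplacian_def sym_weights_def sum_distrib_left
  by (intro sum.cong refl) (simp add: algebra_simps)

lemma integral_weak_derivative_eq_zero:
  fixes f f' g \<phi> \<phi>' :: "real \<Rightarrow> real"
  assumes f: "\<And>t. t \<in> {0..1} \<Longrightarrow> (f has_real_derivative f' t) (at t within {0..1})"
    and \<phi>: "\<And>t. (\<phi> has_real_derivative \<phi>' t) (at t)" and "\<phi> 0 = 0" "\<phi> 1 = 0"
    and g: "\<And>t. 0 < t \<Longrightarrow> t < 1 \<Longrightarrow> g t = - f' t"
  shows "integral {0..1} (\<lambda>t. \<phi>' t * f t - \<phi> t * g t) = 0"
proof -
  have "((\<lambda>t. \<phi> t * f t) has_vector_derivative \<phi>' t * f t + \<phi> t * f' t) (at t within {0..1})"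
    if "t \<in> {0..1}" for t
    using DERIV_mult[OF has_field_derivative_at_within[OF \<phi>] f[OF that]]
    by (simp add: has_real_derivative_iff_has_vector_derivative[symmetric] mult.commute)
  then have "((\<lambda>t. \<phi>' t * f t + \<phi> t * f' t) has_integral \<phi> 1 * f 1 - \<phi> 0 * f 0) {0..1}"
    by (intro fundamental_theorem_of_calculus) auto
  then have "integral {0..1} (\<lambda>t. \<phi>' t * f t + \<phi> t * f' t) = 0"
    using assms by (simp add: integral_unique)
  moreover have "integral {0..1} (\<lambda>t. \<phi>' t * f t - \<phi> t * g t)
      = integral {0..1} (\<lambda>t. \<phi>' t * f t + \<phi> t * f' t)"
    by (rule integral_spike[of "{0,1}"]) (auto simp: g)
  ultimately show ?thesis by simp
qed

lemma absolutely_integrable_on_Icc_bounded: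
  fixes f :: "real \<Rightarrow> real"
  assumes "f \<in> borel_measurable borel" and "\<And>t. t \<in> {a..b} \<Longrightarrow> norm (f t) \<le> M"
  shows "f absolutely_integrable_on {a..b}"
proof (rule measurable_bounded_by_integrable_imp_absolutely_integrable)
  show "f \<in> borel_measurable (lebesgue_on {a..b})"
    using measurable_comp[OF id_borel_measurable_lebesgue_on[of "{a..b}"] assms(1)]
    by (simp add: comp_def)
qed (use assms(2) in \<open>auto intro: integrable_const\<close>)

lemma Wass2_le_of_action_le:
  assumes "(c, \<psi>) \<in> CE1 Q \<mu> \<nu>" and "\<And>t. t \<in> {0..1} \<Longrightarrow> action Q (c t) (\<psi> t) \<le> B"
  shows "Wass2 Q \<mu> \<nu> \<le> ennreal B"
proof -
  have "Wass2 Q \<mu> \<nu> \<le> (\<integral>\<^sup>+ t. ennreal (action Q (c t) (\<psi> t)) * indicator {0..1} t \<partial>lborel)"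
    unfolding Wass2_def by (rule INF_lower2[OF assms(1)]) simp
  also have "\<dots> \<le> (\<integral>\<^sup>+ t. ennreal B * indicator {0..1::real} t \<partial>lborel)"
    using assms(2) by (intro nn_integral_mono) (auto simp: indicator_def intro: ennreal_leI)
  also have "\<dots> = ennreal B"
    by (simp add: nn_integral_cmult_indicator)
  finally show ?thesis .
qed

lemma Wass_less_of_Wass2_le:
  assumes W2: "Wass2 Q \<mu> \<nu> \<le> ennreal B" and "0 \<le> B" "B < \<epsilon>^2" "0 < \<epsilon>"
  shows "Wass Q \<mu> \<nu> < ennreal \<epsilon>"
proof -
  have finite: "Wass2 Q \<mu> \<nu> \<noteq> top" using W2 by (auto simp: top_unique)
  have "enn2real (Wass2 Q \<mu> \<nu>) \<le> B"
    using enn2real_mono[OF W2] \<open>0 \<le> B\<close> by simp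
  then have "sqrt (enn2real (Wass2 Q \<mu> \<nu>)) < sqrt (\<epsilon>^2)"
    using \<open>B < \<epsilon>^2\<close> by (intro real_sqrt_less_mono) simp
  then show ?thesis unfolding Wass_def using finite \<open>0 < \<epsilon>\<close> by (simp add: ennreal_lessI)
qed

lemma lipschitz_on_uniform_finite:
  fixes f :: "'i::finite \<Rightarrow> 'a::metric_space \<Rightarrow> 'b::metric_space"
  assumes "\<And>i. \<exists>L. L-lipschitz_on S (f i)"
  shows "\<exists>L. \<forall>i. L-lipschitz_on S (f i)"
proof -
  obtain L where L: "\<And>i. (L i)-lipschitz_on S (f i)" using assms by metis
  have "(Max (range L))-lipschitz_on S (f i)" for i
    using L by (rule lipschitz_on_le) simp
  then show ?thesis by blast
qed

lemma gibbs_pos: "0 < gibbs K m x"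
proof -
  have "0 < (\<Sum>z\<in>UNIV. exp (- Hpot K m z))" by (intro sum_pos) auto
  then show ?thesis by (simp add: gibbs_def)
qed

section \<open>Short curves near a fixed measure\<close>

locale local_rates =
  fixes Q :: "real^'n::finite \<Rightarrow> 'n \<Rightarrow> 'n \<Rightarrow> real" and \<mu> :: "real^'n"
    and E :: "('n \<times> 'n) set" and x0 :: 'n and Kc q r Qm :: real
  assumes mu_Prob: "\<mu> \<in> Prob"
    and rate_nonneg: "\<And>m x y. m \<in> Prob \<Longrightarrow> x \<noteq> y \<Longrightarrow> 0 \<le> Q m x y"
    and rate_bounded: "\<And>m x y. m \<in> Prob \<Longrightarrow> \<bar>Q m x y\<bar> \<le> Qm"
    and rate_continuous: "\<And>x y. continuous_on Prob (\<lambda>m. Q m x y)"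
    and rate_lower:
      "\<And>m a b. m \<in> Prob \<Longrightarrow> norm (m - \<mu>) \<le> r \<Longrightarrow> (a, b) \<in> E \<Longrightarrow> q \<le> Q m a b \<and> q \<le> Q m b a"
    and q_pos: "0 < q" and r_pos: "0 < r" and Kc_pos: "0 < Kc"
    and poincare: "\<And>p::real^'n. (\<Sum>x\<in>UNIV. (p$x)^2) \<le> Kc * ((p$x0)^2 + (\<Sum>(a,b)\<in>E. (p$b - p$a)^2))"
begin

text \<open>\<open>1033 = 2 \<cdot> (9/2 + 512)\<close>: the factor \<open>2\<close> of the Poisson energy estimate times the
  constant in \<open>mix_path'_norm_sq_le\<close>.\<close>

definition energy_const :: real where "energy_const = 1033 * Kc * real CARD('n) / q"

lemma energy_const_pos: "0 < energy_const"
  using Kc_pos q_pos by (simp add: energy_const_def)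

lemma Qm_nonneg: "0 \<le> Qm"
  using rate_bounded[OF mu_Prob, of x0 x0] by linarith

end

lemma local_rates_exist:
  fixes Q :: "real^'n::finite \<Rightarrow> 'n \<Rightarrow> 'n \<Rightarrow> real"
  assumes mu: "\<mu> \<in> Prob"
    and nonneg: "\<And>m x y. m \<in> Prob \<Longrightarrow> x \<noteq> y \<Longrightarrow> 0 \<le> Q m x y"
    and lip: "\<And>x y. L-lipschitz_on Prob (\<lambda>m. Q m x y)"
    and edge_pos: "\<And>a b. (a, b) \<in> E \<Longrightarrow> 0 < Q \<mu> a b \<and> 0 < Q \<mu> b a"
    and Kc: "0 < Kc" "\<And>p::real^'n. (\<Sum>x\<in>UNIV. (p$x)^2) \<le> Kc * ((p$x0)^2 + (\<Sum>(a,b)\<in>E. (p$b - p$a)^2))"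
  shows "\<exists>q r Qm. local_rates Q \<mu> E x0 Kc q r Qm"
proof -
  define q where "q = Min (insert 1 ((\<lambda>(a,b). min (Q \<mu> a b) (Q \<mu> b a) / 2) ` E))"
  define r where "r = q / (L + 1)"
  define Qm where "Qm = Max (range (\<lambda>(a,b). \<bar>Q \<mu> a b\<bar>)) + 2 * L"
  have L: "0 \<le> L" using lipschitz_on_nonneg[OF lip] .
  have q_pos: "0 < q" unfolding q_def using edge_pos by auto
  have r_pos: "0 < r" unfolding r_def using q_pos L by simp
  have close: "\<bar>Q m a b - Q \<mu> a b\<bar> \<le> L * norm (m - \<mu>)" if "m \<in> Prob" for m :: "real^'n" and a b
    using lipschitz_on_normD[OF lip that mu] by simp
  show ?thesis
  proof (intro exI, unfold_locales)
    fix m :: "real^'n" and a b assume m: "m \<in> Prob" and near: "norm (m - \<mu>) \<le> r" and ab: "(a, b) \<in> E"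
    have "q \<le> min (Q \<mu> a b) (Q \<mu> b a) / 2"
      unfolding q_def using ab by (intro Min_le) auto
    moreover have "L * norm (m - \<mu>) \<le> q"
    proof -
      have "L * norm (m - \<mu>) \<le> (L + 1) * r" using near L by (intro mult_mono) auto
      then show ?thesis using L by (simp add: r_def)
    qed
    ultimately show "q \<le> Q m a b \<and> q \<le> Q m b a"
      using close[OF m, of a b] close[OF m, of b a] by linarith
  next
    fix m :: "real^'n" and a b assume m: "m \<in> Prob"
    have "\<bar>Q \<mu> a b\<bar> \<le> Max (range (\<lambda>(a,b). \<bar>Q \<mu> a b\<bar>))"
      by (rule Max_ge) (auto intro: image_eqI[where x="(a,b)"])
    moreover have "L * norm (m - \<mu>) \<le> L * 2" using Prob_dist_le_2[OF m mu] L by (intro mult_left_mono)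
    ultimately show "\<bar>Q m a b\<bar> \<le> Qm" using close[OF m, of a b] by (simp add: Qm_def)
  qed (use mu nonneg Kc q_pos r_pos lipschitz_on_continuous_on[OF lip] in auto)
qed

locale local_interpolation = local_rates +
  fixes \<nu> :: "real^'n" and \<eta> :: real
  assumes nu_Prob: "\<nu> \<in> Prob" and eta_pos: "0 < \<eta>" and eta_le_1: "\<eta> \<le> 1"
    and eta_le_r: "\<eta> \<le> r / 4" and nu_near: "norm (\<nu> - \<mu>) \<le> \<eta>"
begin

definition curve :: "real \<Rightarrow> real^'n" where
  "curve t = mix_path \<mu> \<nu> \<eta> (max 0 (min 1 t))"

definition weights :: "real \<Rightarrow> 'n \<Rightarrow> 'n \<Rightarrow> real" where
  "weights t = sym_weights Q (curve t)"

definition source :: "real \<Rightarrow> real^'n" where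
  "source t = - mix_path' \<mu> \<nu> \<eta> t"

definition floor_weight :: "real \<Rightarrow> real" where
  "floor_weight t = q * \<eta> * bump t / real CARD('n)"

text \<open>The floor weight vanishes at \<open>t = 0, 1\<close>, so the Poisson equation is only solved on
  the open interval; the endpoints are negligible for the continuity equation.\<close>

definition potential :: "real \<Rightarrow> real^'n" where
  "potential t = (if t \<in> {0<..<1} then poisson_solution (weights t) x0 (source t) else 0)"

lemma curve_eq: "t \<in> {0..1} \<Longrightarrow> curve t = mix_path \<mu> \<nu> \<eta> t"
  by (simp add: curve_def)

lemma curve_Prob: "curve t \<in> Prob"
  unfolding curve_def using eta_pos eta_le_1 by (intro mix_path_Prob mu_Prob nu_Prob) auto

lemma curve_near: "norm (curve t - \<mu>) \<le> r"
proof -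
  have "norm (curve t - \<mu>) \<le> norm (\<nu> - \<mu>) + 2 * \<eta>"
    unfolding curve_def using eta_pos eta_le_1 by (intro mix_path_dist mu_Prob nu_Prob) auto
  then show ?thesis using nu_near eta_le_r eta_pos by linarith
qed

lemma curve_continuous: "continuous_on UNIV curve"
  unfolding curve_def[abs_def] by (rule mix_path_continuous)

lemma curve_has_derivative:
  "t \<in> {0..1} \<Longrightarrow> ((\<lambda>s. curve s $ x) has_real_derivative mix_path' \<mu> \<nu> \<eta> t $ x) (at t within {0..1})"
  by (rule has_field_derivative_transform_within[OF mix_path_has_derivative, of 1])
    (auto simp: curve_eq)

lemma curve_measurable[measurable]: "(\<lambda>t. curve t $ x) \<in> borel_measurable borel"
  by (intro borel_measurable_continuous_onI continuous_on_component curve_continuous)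

lemma rate_curve_measurable[measurable]: "(\<lambda>t. Q (curve t) a b) \<in> borel_measurable borel"
  using continuous_on_compose2[OF rate_continuous curve_continuous] curve_Prob
  by (intro borel_measurable_continuous_onI) auto

lemma wgt_curve_nonneg: "x \<noteq> y \<Longrightarrow> 0 \<le> wgt Q (curve t) x y"
  unfolding wgt_def using curve_Prob[of t] rate_nonneg[OF curve_Prob]
  by (intro logmean_nonneg mult_nonneg_nonneg) (auto simp: Prob_def)

lemma wgt_curve_le: "x \<noteq> y \<Longrightarrow> wgt Q (curve t) x y \<le> Qm"
proof -
  assume xy: "x \<noteq> y"
  have mass_rate_le: "curve t $ a * Q (curve t) a b \<le> Qm" if "a \<noteq> b" for a b
  proof -
    have "curve t $ a * Q (curve t) a b \<le> Q (curve t) a b"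
      using curve_Prob[of t] Prob_component_le_1[OF curve_Prob] rate_nonneg[OF curve_Prob that]
      by (intro mult_left_le_one_le) (auto simp: Prob_def)
    then show ?thesis using rate_bounded[OF curve_Prob, of t a b] by linarith
  qed
  have "wgt Q (curve t) x y \<le> max (curve t $ x * Q (curve t) x y) (curve t $ y * Q (curve t) y x)"
    unfolding wgt_def using curve_Prob[of t] rate_nonneg[OF curve_Prob] xy
    by (intro logmean_le_max mult_nonneg_nonneg) (auto simp: Prob_def)
  then show ?thesis using mass_rate_le[OF xy] mass_rate_le[of y x] xy by simp
qed

lemma weights_nonneg: "x \<noteq> y \<Longrightarrow> 0 \<le> weights t x y"
  unfolding weights_def sym_weights_def using wgt_curve_nonneg by (simp add: add_nonneg_nonneg)

lemma floor_weight_le_weights: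
  assumes "(a, b) \<in> E" "0 < t" "t < 1"
  shows "floor_weight t \<le> weights t a b"
proof -
  have t: "t \<in> {0..1}" using assms by auto
  have mass_ge: "\<eta> * bump t / real CARD('n) \<le> curve t $ z" for z
    using mix_path_ge[OF mu_Prob nu_Prob] eta_pos eta_le_1 t by (auto simp: curve_eq)
  have floor_pos: "0 < floor_weight t"
    unfolding floor_weight_def using q_pos eta_pos bump_pos assms by simp
  have rates: "q \<le> Q (curve t) a b" "q \<le> Q (curve t) b a"
    using rate_lower[OF curve_Prob curve_near assms(1)] by auto
  have mass_rate_ge: "floor_weight t \<le> curve t $ c * Q (curve t) c d" if "q \<le> Q (curve t) c d" for c d
  proof -
    have "\<eta> * bump t / real CARD('n) * q \<le> curve t $ c * Q (curve t) c d"
      using mass_ge[of c] that q_pos curve_Prob[of t] by (intro mult_mono) (auto simp: Prob_def)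
    then show ?thesis by (simp add: floor_weight_def field_simps)
  qed
  have "floor_weight t \<le> curve t $ a * Q (curve t) a b" "floor_weight t \<le> curve t $ b * Q (curve t) b a"
    using mass_rate_ge rates by auto
  then have "floor_weight t \<le> wgt Q (curve t) a b" "floor_weight t \<le> wgt Q (curve t) b a"
    unfolding wgt_def using floor_pos
    by (auto intro!: order_trans[OF _ logmean_ge_min])
  then show ?thesis by (simp add: weights_def sym_weights_def)
qed

lemma poisson_setting_weights:
  assumes "0 < t" "t < 1"
  shows "poisson_setting (weights t) E x0 (floor_weight t) Kc"
  using weights_nonneg floor_weight_le_weights[OF _ assms] Kc_pos poincare q_pos eta_pos
    bump_pos[OF assms]
  by unfold_locales (auto simp: weights_def sym_weights_def floor_weight_def)

lemma sum_source: "t \<in> {0..1} \<Longrightarrow> (\<Sum>x\<in>UNIV. source t $ x) = 0"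
  using sum_mix_path'[OF mu_Prob nu_Prob, of \<eta> t] eta_pos eta_le_1
  by (simp add: source_def sum_negf)

lemma graph_laplacian_potential:
  "0 < t \<Longrightarrow> t < 1 \<Longrightarrow> graph_laplacian (weights t) (potential t) x = source t $ x"
  using poisson_setting.poisson_solution_solves(2)[OF poisson_setting_weights sum_source]
  by (simp add: potential_def)

lemma dirichlet_form_potential_le: "dirichlet_form (weights t) (potential t) \<le> energy_const * \<eta>"
proof (cases "t \<in> {0<..<1}")
  case True
  then have t: "0 < t" "t < 1" "t \<in> {0..1}" by auto
  have "(norm (source t))^2 \<le> (9/2 * (norm (\<nu> - \<mu>))^2 + 512 * \<eta>^2) * bump t"
    using mix_path'_norm_sq_le[OF mu_Prob nu_Prob, of \<eta> t] eta_pos eta_le_1 t by (simp add: source_def)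
  also have "\<dots> \<le> (9/2 * \<eta>^2 + 512 * \<eta>^2) * bump t"
    using nu_near bump_pos[OF t(1,2)] by (intro mult_right_mono add_right_mono mult_left_mono power_mono) auto
  finally have source_bound: "(norm (source t))^2 \<le> 1033/2 * \<eta>^2 * bump t" by simp
  have "dirichlet_form (weights t) (potential t) \<le> 2 * Kc / floor_weight t * (norm (source t))^2"
    using poisson_setting.dirichlet_form_poisson_solution_le[OF poisson_setting_weights sum_source] t
    by (simp add: potential_def)
  also have "\<dots> \<le> 2 * Kc / floor_weight t * (1033/2 * \<eta>^2 * bump t)"
    using Kc_pos q_pos eta_pos bump_pos[OF t(1,2)]
    by (intro mult_left_mono source_bound) (simp add: floor_weight_def)
  also have "\<dots> = energy_const * \<eta>"
    using q_pos eta_pos bump_pos[OF t(1,2)]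
    by (simp add: energy_const_def floor_weight_def field_simps power2_eq_square)
  finally show ?thesis .
next
  case False
  then show ?thesis
    using energy_const_pos eta_pos unfolding potential_def if_not_P[OF False]
    by (simp add: dirichlet_form_def)
qed

lemma potential_measurable[measurable]: "(\<lambda>t. potential t $ y) \<in> borel_measurable borel"
proof -
  have [measurable]: "(\<lambda>t. weights t a b) \<in> borel_measurable borel" for a b
    unfolding weights_def sym_weights_def wgt_def by measurable
  have [measurable]: "(\<lambda>t. source t $ z) \<in> borel_measurable borel" for z
    unfolding source_def vector_uminus_component mix_path'_component
      smoothstep_def smoothstep'_def bump_def bump'_def
    by (intro borel_measurable_continuous_onI continuous_intros)
  have "(\<lambda>t. poisson_solution (weights t) x0 (source t) $ y) \<in> borel_measurable borel"
    by (rule poisson_solution_measurable) measurable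
  then show ?thesis
    unfolding potential_def by (simp add: if_distrib[of "\<lambda>p. p $ y"] cong: if_cong)
qed

lemma flux_bounded:
  "norm (wgt Q (curve t) x y * (potential t $ y - potential t $ x))
     \<le> sqrt (4 * Qm * (energy_const * \<eta>))"
proof (cases "x \<noteq> y")
  case True
  define w where "w = wgt Q (curve t) x y"
  define D where "D = (potential t $ y - potential t $ x)^2"
  have w: "0 \<le> w" "w \<le> Qm" unfolding w_def using wgt_curve_nonneg wgt_curve_le True by auto
  have "w * D \<le> 2 * (D * weights t x y)"
    unfolding weights_def sym_weights_def w_def D_def using wgt_curve_nonneg[of y x t] True
    by (simp add: algebra_simps)
  also have "D * weights t x y \<le> 2 * dirichlet_form (weights t) (potential t)"
    unfolding D_def by (rule dirichlet_form_ge_term) (rule weights_nonneg)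
  finally have "w * D \<le> 4 * (energy_const * \<eta>)"
    using dirichlet_form_potential_le[of t] by simp
  then have "w * (w * D) \<le> Qm * (4 * (energy_const * \<eta>))"
    using w Qm_nonneg by (intro mult_mono[OF w(2)]) (auto simp: D_def)
  then have "(wgt Q (curve t) x y * (potential t $ y - potential t $ x))^2 \<le> 4 * Qm * (energy_const * \<eta>)"
    by (simp add: w_def D_def power2_eq_square algebra_simps)
  then show ?thesis using real_sqrt_le_mono by fastforce
next
  case False
  then show ?thesis using Qm_nonneg energy_const_pos eta_pos by simp
qed

lemma curve_CE1: "(curve, \<lambda>t y. potential t $ y) \<in> CE1 Q \<mu> \<nu>"
  unfolding CE1_def mem_Collect_eq prod.case
proof (intro conjI allI impI ballI)
  show "continuous_on {0..1} curve" using curve_continuous by (rule continuous_on_subset) simp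
  show "curve t \<in> Prob" for t by (rule curve_Prob)
  show "curve 0 = \<mu>" "curve 1 = \<nu>" by (simp_all add: curve_def mix_path_0 mix_path_1)
  show "(\<lambda>t. wgt Q (curve t) x y * (potential t $ y - potential t $ x)) absolutely_integrable_on {0..1}"
    for x y
    by (rule absolutely_integrable_on_Icc_bounded[OF _ flux_bounded]) (unfold wgt_def, measurable)
next
  fix \<phi> :: "real \<Rightarrow> real" and \<phi>' a b x
  assume "(\<forall>t. (\<phi> has_real_derivative \<phi>' t) (at t)) \<and> continuous_on UNIV \<phi>' \<and>
    0 < a \<and> a \<le> b \<and> b < 1 \<and> (\<forall>t. t \<notin> {a..b} \<longrightarrow> \<phi> t = 0)"
  moreover have "1/2 * (\<Sum>y\<in>UNIV. wgt Q (curve t) x y * (potential t $ y - potential t $ x)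
                              - wgt Q (curve t) y x * (potential t $ x - potential t $ y))
      = - mix_path' \<mu> \<nu> \<eta> t $ x" if "0 < t" "t < 1" for t
    using graph_laplacian_potential[OF that, of x]
    unfolding divergence_eq_graph_laplacian weights_def source_def by simp
  ultimately show "integral {0..1} (\<lambda>t. \<phi>' t * curve t $ x
      - \<phi> t * (1/2 * (\<Sum>y\<in>UNIV. wgt Q (curve t) x y * (potential t $ y - potential t $ x)
                              - wgt Q (curve t) y x * (potential t $ x - potential t $ y)))) = 0"
    by (intro integral_weak_derivative_eq_zero[OF curve_has_derivative]) auto
qed

lemma Wass2_le: "Wass2 Q \<mu> \<nu> \<le> ennreal (energy_const * \<eta>)"
  using dirichlet_form_potential_le
  by (intro Wass2_le_of_action_le[OF curve_CE1]) (simp add: action_eq_dirichlet_form weights_def)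

end

context local_rates
begin

lemma Wass_less_near:
  assumes "0 < \<epsilon>"
  shows "\<exists>\<delta>>0. \<forall>\<nu>\<in>Prob. norm (\<mu> - \<nu>) \<le> \<delta> \<longrightarrow> Wass Q \<mu> \<nu> < ennreal \<epsilon>"
proof -
  define \<eta> where "\<eta> = min (min 1 (r / 4)) (\<epsilon>^2 / (2 * energy_const))"
  have \<eta>: "0 < \<eta>" "\<eta> \<le> 1" "\<eta> \<le> r / 4"
    using r_pos assms energy_const_pos by (auto simp: \<eta>_def)
  have "energy_const * \<eta> \<le> \<epsilon>^2 / 2"
    using mult_left_mono[of \<eta> "\<epsilon>^2 / (2 * energy_const)" energy_const] energy_const_pos
    by (simp add: \<eta>_def)
  then have small: "energy_const * \<eta> < \<epsilon>^2"
    using assms mult_pos_pos[OF energy_const_pos \<eta>(1)] by simp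
  have "Wass Q \<mu> \<nu> < ennreal \<epsilon>" if "\<nu> \<in> Prob" "norm (\<mu> - \<nu>) \<le> \<eta>" for \<nu>
  proof -
    interpret local_interpolation Q \<mu> E x0 Kc q r Qm \<nu> \<eta>
      using that \<eta> by unfold_locales (simp_all add: norm_minus_commute)
    show ?thesis
      using Wass2_le small energy_const_pos \<eta> assms by (intro Wass_less_of_Wass2_le) auto
  qed
  then show ?thesis using \<eta>(1) by blast
qed

end

theorem lemma4p3:
  fixes K :: "real^'n::finite \<Rightarrow> 'n \<Rightarrow> real"
    and Q :: "real^'n \<Rightarrow> 'n \<Rightarrow> 'n \<Rightarrow> real"
    and S :: "(real^'n) set"
  assumes S_open: "open S" and S_Prob: "Prob \<subseteq> S"
    and K_C2: "\<And>x. C2_on S (\<lambda>\<mu>. K \<mu> x)"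
    and Q_rate: "\<And>\<mu> x y. \<mu> \<in> Prob \<Longrightarrow> x \<noteq> y \<Longrightarrow> 0 \<le> Q \<mu> x y"
    and Q_irred: "\<And>\<mu> x y. \<mu> \<in> Prob \<Longrightarrow> (x, y) \<in> {(a, b). a \<noteq> b \<and> 0 < Q \<mu> a b}\<^sup>*"
    and Q_rev: "\<And>\<mu> x y. \<mu> \<in> Prob \<Longrightarrow> gibbs K \<mu> x * Q \<mu> x y = gibbs K \<mu> y * Q \<mu> y x"
    and Q_lip: "\<And>x y. \<exists>L. L-lipschitz_on Prob (\<lambda>\<mu>. Q \<mu> x y)"
  shows "\<forall>\<mu>\<in>Prob. \<forall>\<epsilon>>0. \<exists>\<delta>>0. \<forall>\<nu>\<in>Prob. norm (\<mu> - \<nu>) \<le> \<delta> \<longrightarrow> Wass Q \<mu> \<nu> < ennreal \<epsilon>"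
proof (intro ballI allI impI)
  fix \<mu> :: "real^'n" and \<epsilon> :: real
  assume \<mu>: "\<mu> \<in> Prob" and \<epsilon>: "0 < \<epsilon>"
  define E where "E = {(a, b). a \<noteq> b \<and> 0 < Q \<mu> a b}"
  obtain x0 :: 'n where True by simp
  obtain Kc where Kc: "0 < Kc"
    "\<And>p::real^'n. (\<Sum>x\<in>UNIV. (p$x)^2) \<le> Kc * ((p$x0)^2 + (\<Sum>(a,b)\<in>E. (p$b - p$a)^2))"
    using discrete_poincare[of x0 E] Q_irred[OF \<mu>] unfolding E_def by blast
  have edge_pos: "0 < Q \<mu> a b \<and> 0 < Q \<mu> b a" if "(a, b) \<in> E" for a b
  proof -
    have "0 < gibbs K \<mu> a * Q \<mu> a b" using that gibbs_pos[of K \<mu> a] by (simp add: E_def)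
    then have "0 < gibbs K \<mu> b * Q \<mu> b a" by (simp only: Q_rev[OF \<mu>])
    then show ?thesis using that gibbs_pos[of K \<mu> b] by (simp add: E_def zero_less_mult_iff)
  qed
  obtain L where "\<forall>xy. L-lipschitz_on Prob (\<lambda>m. Q m (fst xy) (snd xy))"
    using lipschitz_on_uniform_finite[of Prob "\<lambda>xy m. Q m (fst xy) (snd xy)"] Q_lip by auto
  then have lip: "\<And>x y. L-lipschitz_on Prob (\<lambda>m. Q m x y)"
    by (metis fst_conv snd_conv)
  obtain q r Qm where "local_rates Q \<mu> E x0 Kc q r Qm"
    using local_rates_exist[where Q=Q and E=E, OF \<mu> Q_rate lip edge_pos Kc] by blast
  then show "\<exists>\<delta>>0. \<forall>\<nu>\<in>Prob. norm (\<mu> - \<nu>) \<le> \<delta> \<longrightarrow> Wass Q \<mu> \<nu> < ennreal \<epsilon>"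
    using local_rates.Wass_less_near \<epsilon> by blast
qed

end
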